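(* For every integer $k\ge 1$ and all FDSs $A,B$, if $A^k=B^k$ then $A=B$.
   Context: A finite dynamical system (FDS) is a function $A:S_A\to S_A$ on a finite set $S_A$, considered up to isomorphism of functional graphs (vertex set $S_A$, arcs $x\to A(x)$). The product $AB$ is the function on $S_A\times S_B$ given by $(a,b)\mapsto(A(a),B(b))$, and $A^k$ denotes the $k$-fold product $A\times\cdots\times A$ (not the iterate/composition). *)

theory Defs
  imports Main
begin

definition is_fds :: "'a set \<Rightarrow> ('a \<Rightarrow> 'a) \<Rightarrow> bool" where
  "is_fds S f \<longleftrightarrow> finite S \<and> (\<forall>x\<in>S. f x \<in> S)"

definition fds_iso :: "'a set \<Rightarrow> ('a \<Rightarrow> 'a) \<Rightarrow> 'b set \<Rightarrow> ('b \<Rightarrow> 'b) \<Rightarrow> bool" where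
  "fds_iso S f T g \<longleftrightarrow> (\<exists>h. bij_betw h S T \<and> (\<forall>x\<in>S. h (f x) = g (h x)))"

text \<open>k-fold direct product A^k: states are k-tuples (lists of length k) over S,
  the map acts componentwise.\<close>
definition pow_carrier :: "nat \<Rightarrow> 'a set \<Rightarrow> 'a list set" where
  "pow_carrier k S = {xs. length xs = k \<and> set xs \<subseteq> S}"

definition pow_map :: "('a \<Rightarrow> 'a) \<Rightarrow> 'a list \<Rightarrow> 'a list" where
  "pow_map f = map f"

end

theory Submission
  imports Defs "HOL-Library.FuncSet"
begin

text \<open>Lovasz's counting argument. For a finite digraph \<open>(V, E)\<close> let \<open>hom(G, A)\<close> be the number
  of maps \<open>h\<close> from \<open>V\<close> into the state set of \<open>A\<close> with \<open>A (h x) = h y\<close> for every arc \<open>(x, y)\<close>.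
  Since \<open>hom(G, A\<^sup>k) = hom(G, A)\<^sup>k\<close>, an isomorphism \<open>A\<^sup>k \<cong> B\<^sup>k\<close> forces \<open>hom(G, A) = hom(G, B)\<close>
  for all \<open>G\<close>. Grouping homomorphisms by their kernel writes \<open>hom(G, A)\<close> as the sum, over all
  partitions of \<open>V\<close>, of the numbers of injective homomorphisms from the quotient graphs; by
  induction on \<open>|V|\<close> the numbers of injective homomorphisms from every \<open>G\<close> into \<open>A\<close> and into \<open>B\<close>
  agree. Taking for \<open>G\<close> the functional graph of \<open>A\<close>, resp. \<open>B\<close>, yields embeddings \<open>A \<rightarrow> B\<close> and
  \<open>B \<rightarrow> A\<close>, hence \<open>A \<cong> B\<close>.\<close>

definition homs :: "'v set \<Rightarrow> ('v \<times> 'v) set \<Rightarrow> 'a set \<Rightarrow> ('a \<Rightarrow> 'a) \<Rightarrow> ('v \<Rightarrow> 'a) set" where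
  "homs V E S f = {h \<in> V \<rightarrow>\<^sub>E S. \<forall>(x, y)\<in>E. f (h x) = h y}"

definition inj_homs :: "'v set \<Rightarrow> ('v \<times> 'v) set \<Rightarrow> 'a set \<Rightarrow> ('a \<Rightarrow> 'a) \<Rightarrow> ('v \<Rightarrow> 'a) set" where
  "inj_homs V E S f = {h \<in> homs V E S f. inj_on h V}"

text \<open>A partition of \<open>V\<close> is encoded by the map sending each element to the least element of its
  block; \<open>kernel_rep V h\<close> encodes the partition of \<open>V\<close> into the fibres of \<open>h\<close>.\<close>

definition kernel_rep :: "'v::wellorder set \<Rightarrow> ('v \<Rightarrow> 'a) \<Rightarrow> 'v \<Rightarrow> 'v" where
  "kernel_rep V h = (\<lambda>x\<in>V. LEAST y. y \<in> V \<and> h y = h x)"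

definition partition_reps :: "'v::wellorder set \<Rightarrow> ('v \<Rightarrow> 'v) set" where
  "partition_reps V = {r. kernel_rep V r = r}"

lemma homs_memD:
  assumes "h \<in> homs V E S f"
  shows "x \<in> V \<Longrightarrow> h x \<in> S" and "x \<notin> V \<Longrightarrow> h x = undefined"
    and "(x, y) \<in> E \<Longrightarrow> f (h x) = h y"
  using assms by (auto simp: homs_def)

lemma finite_homs: "finite V \<Longrightarrow> finite S \<Longrightarrow> finite (homs V E S f)"
  unfolding homs_def by (rule finite_subset[OF _ finite_PiE[of V "\<lambda>_. S"]]) auto

lemma finite_inj_homs: "finite V \<Longrightarrow> finite S \<Longrightarrow> finite (inj_homs V E S f)"
  unfolding inj_homs_def by (auto intro: finite_subset[OF _ finite_homs])

lemma kernel_rep_mem: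
  assumes "x \<in> V"
  shows "kernel_rep V h x \<in> V" and "h (kernel_rep V h x) = h x"
  using LeastI[of "\<lambda>y. y \<in> V \<and> h y = h x" x] assms by (auto simp: kernel_rep_def)

lemma kernel_rep_PiE: "kernel_rep V h \<in> V \<rightarrow>\<^sub>E V"
  by (rule PiE_I) (simp_all add: kernel_rep_mem(1), simp add: kernel_rep_def)

lemma kernel_rep_eq_iff:
  assumes "x \<in> V" "y \<in> V"
  shows "kernel_rep V h x = kernel_rep V h y \<longleftrightarrow> h x = h y"
  using assms kernel_rep_mem[of _ V h] by (auto simp: kernel_rep_def) metis

lemma kernel_rep_cong:
  assumes "\<And>x y. x \<in> V \<Longrightarrow> y \<in> V \<Longrightarrow> h x = h y \<longleftrightarrow> h' x = h' y"
  shows "kernel_rep V h = kernel_rep V h'"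
  unfolding kernel_rep_def using assms by (intro restrict_ext) metis

lemma kernel_rep_in_partition_reps: "kernel_rep V h \<in> partition_reps V"
  unfolding partition_reps_def by (auto intro: kernel_rep_cong simp: kernel_rep_eq_iff)

lemma partition_reps_mem:
  assumes "r \<in> partition_reps V" "x \<in> V"
  shows "r x \<in> V" and "r (r x) = r x"
  using kernel_rep_mem[OF assms(2), of r] assms(1) by (simp_all add: partition_reps_def)

lemma partition_reps_subset: "partition_reps V \<subseteq> V \<rightarrow>\<^sub>E V"
proof
  fix r assume "r \<in> partition_reps V"
  then have "r = kernel_rep V r" by (simp add: partition_reps_def)
  then show "r \<in> V \<rightarrow>\<^sub>E V" using kernel_rep_PiE by metis
qed

lemma finite_partition_reps: "finite V \<Longrightarrow> finite (partition_reps V)"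
  by (rule finite_subset[OF partition_reps_subset finite_PiE]) auto

lemma restrict_hom_in_inj_homs_quotient:
  assumes "h \<in> homs V E S f" "E \<subseteq> V \<times> V"
  defines "r \<equiv> kernel_rep V h"
  shows "restrict h (r ` V) \<in> inj_homs (r ` V) (map_prod r r ` E) S f"
proof -
  have r: "r x \<in> V" "h (r x) = h x" if "x \<in> V" for x
    using kernel_rep_mem[OF that] unfolding r_def by auto
  have inj: "inj_on h (r ` V)"
  proof (rule inj_onI)
    fix a b assume "a \<in> r ` V" "b \<in> r ` V" "h a = h b"
    then obtain x y where "x \<in> V" "y \<in> V" "a = r x" "b = r y" "h x = h y"
      using r(2) by auto
    then show "a = b"
      unfolding r_def by (simp add: kernel_rep_eq_iff)
  qed
  have edges: "f (h (r x)) = h (r y)" if "(x, y) \<in> E" for x y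
    using that assms(2) r(2) homs_memD(3)[OF assms(1)] by auto
  have values_in_S: "h (r x) \<in> S" if "x \<in> V" for x
    using that r(2) homs_memD(1)[OF assms(1)] by simp
  show ?thesis
    unfolding inj_homs_def homs_def
  proof (intro CollectI conjI)
    show "restrict h (r ` V) \<in> r ` V \<rightarrow>\<^sub>E S"
      using values_in_S by auto
    show "\<forall>(a, b)\<in>map_prod r r ` E. f (restrict h (r ` V) a) = restrict h (r ` V) b"
      using edges assms(2) by fastforce
    show "inj_on (restrict h (r ` V)) (r ` V)"
      using inj by (simp add: inj_on_def)
  qed
qed

lemma lift_inj_hom_along_partition_rep:
  assumes "r \<in> partition_reps V" "h \<in> inj_homs (r ` V) (map_prod r r ` E) S f" "E \<subseteq> V \<times> V"
  shows "restrict (h \<circ> r) V \<in> homs V E S f"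
    and "kernel_rep V (restrict (h \<circ> r) V) = r"
    and "restrict (restrict (h \<circ> r) V) (r ` V) = h"
proof -
  have h: "h \<in> homs (r ` V) (map_prod r r ` E) S f" "inj_on h (r ` V)"
    using assms(2) by (auto simp: inj_homs_def)
  have "f (h (r x)) = h (r y)" if "(x, y) \<in> E" for x y
    using homs_memD(3)[OF h(1)] that by force
  then show "restrict (h \<circ> r) V \<in> homs V E S f"
    using homs_memD(1)[OF h(1)] assms(3) by (auto simp: homs_def)
  have "kernel_rep V (restrict (h \<circ> r) V) = kernel_rep V r"
    using h(2) by (intro kernel_rep_cong) (auto simp: inj_on_def)
  then show "kernel_rep V (restrict (h \<circ> r) V) = r"
    using assms(1) by (simp add: partition_reps_def)
  show "restrict (restrict (h \<circ> r) V) (r ` V) = h"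
  proof
    fix z
    show "restrict (restrict (h \<circ> r) V) (r ` V) z = h z"
      using partition_reps_mem[OF assms(1)] homs_memD(2)[OF h(1), of z]
      by (cases "z \<in> r ` V") auto
  qed
qed

lemma bij_betw_homs_Sigma_inj_homs:
  assumes "E \<subseteq> V \<times> V"
  shows "bij_betw (\<lambda>h. (kernel_rep V h, restrict h (kernel_rep V h ` V))) (homs V E S f)
           (SIGMA r:partition_reps V. inj_homs (r ` V) (map_prod r r ` E) S f)"
proof (rule bij_betwI[where g = "\<lambda>(r, h). restrict (h \<circ> r) V"])
  show "(\<lambda>h. (kernel_rep V h, restrict h (kernel_rep V h ` V))) \<in> homs V E S f \<rightarrow>
          (SIGMA r:partition_reps V. inj_homs (r ` V) (map_prod r r ` E) S f)"
    using restrict_hom_in_inj_homs_quotient[OF _ assms] kernel_rep_in_partition_reps by blast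
  show "(\<lambda>(r, h). restrict (h \<circ> r) V) \<in> (SIGMA r:partition_reps V. inj_homs (r ` V) (map_prod r r ` E) S f)
          \<rightarrow> homs V E S f"
    using lift_inj_hom_along_partition_rep(1)[OF _ _ assms] by (intro Pi_I) (auto split: prod.splits)
  show "(\<lambda>(r, h). restrict (h \<circ> r) V) (kernel_rep V h, restrict h (kernel_rep V h ` V)) = h"
    if "h \<in> homs V E S f" for h
    using kernel_rep_mem[of _ V h] homs_memD(2)[OF that] by (auto simp: restrict_def)
  show "(\<lambda>h. (kernel_rep V h, restrict h (kernel_rep V h ` V))) ((\<lambda>(r, h). restrict (h \<circ> r) V) p) = p"
    if "p \<in> (SIGMA r:partition_reps V. inj_homs (r ` V) (map_prod r r ` E) S f)" for p
    using that lift_inj_hom_along_partition_rep(2,3)[OF _ _ assms] by auto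
qed

lemma card_homs_eq_sum_card_inj_homs:
  assumes "E \<subseteq> V \<times> V" "finite V" "finite S"
  shows "card (homs V E S f) = (\<Sum>r\<in>partition_reps V. card (inj_homs (r ` V) (map_prod r r ` E) S f))"
proof -
  have "card (homs V E S f) = card (SIGMA r:partition_reps V. inj_homs (r ` V) (map_prod r r ` E) S f)"
    by (rule bij_betw_same_card[OF bij_betw_homs_Sigma_inj_homs[OF assms(1)]])
  also have "\<dots> = (\<Sum>r\<in>partition_reps V. card (inj_homs (r ` V) (map_prod r r ` E) S f))"
    using assms(2,3) by (simp add: finite_partition_reps finite_inj_homs)
  finally show ?thesis .
qed

lemma restrict_id_in_partition_reps: "(\<lambda>x\<in>V. x) \<in> partition_reps V"
  unfolding partition_reps_def kernel_rep_def by (auto intro!: restrict_ext Least_equality)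

lemma card_image_partition_rep_less:
  assumes "r \<in> partition_reps V" "r \<noteq> (\<lambda>x\<in>V. x)" "finite V"
  shows "card (r ` V) < card V"
proof -
  obtain x where x: "x \<in> V" "r x \<noteq> x"
    using assms(1,2) partition_reps_subset by (force simp: PiE_iff extensional_def)
  then have "\<not> inj_on r V"
    using partition_reps_mem[OF assms(1) x(1)] by (auto simp: inj_on_def)
  then show ?thesis
    using card_image_le[OF assms(3), of r] inj_on_iff_eq_card[OF assms(3), of r] by linarith
qed

lemma card_homs_eq_card_inj_homs_plus_quotients:
  assumes "E \<subseteq> V \<times> V" "finite V" "finite S"
  shows "card (homs V E S f) = card (inj_homs V E S f) +
           (\<Sum>r\<in>partition_reps V - {\<lambda>x\<in>V. x}. card (inj_homs (r ` V) (map_prod r r ` E) S f))"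
proof -
  have "map_prod (\<lambda>x\<in>V. x) (\<lambda>x\<in>V. x) ` E = id ` E"
    using assms(1) by (intro image_cong) auto
  then have id_quotient: "(\<lambda>x\<in>V. x) ` V = V" "map_prod (\<lambda>x\<in>V. x) (\<lambda>x\<in>V. x) ` E = E"
    by auto
  show ?thesis
    unfolding card_homs_eq_sum_card_inj_homs[OF assms]
    by (subst sum.remove[OF finite_partition_reps[OF assms(2)] restrict_id_in_partition_reps])
      (simp only: id_quotient)
qed

lemma card_inj_homs_eq_if_card_homs_eq:
  fixes S :: "'a set" and T :: "'b set" and V :: "'v::wellorder set"
  assumes "finite S" "finite T"
    and homs_eq: "\<And>V E. finite (V :: 'v set) \<Longrightarrow> E \<subseteq> V \<times> V \<Longrightarrow> card (homs V E S f) = card (homs V E T g)"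
  shows "finite V \<Longrightarrow> E \<subseteq> V \<times> V \<Longrightarrow> card (inj_homs V E S f) = card (inj_homs V E T g)"
proof (induction "card V" arbitrary: V E rule: less_induct)
  case less
  let ?id = "\<lambda>x\<in>V. x"
  let ?R = "partition_reps V - {?id}"
  have quotients_eq: "card (inj_homs (r ` V) (map_prod r r ` E) S f) = card (inj_homs (r ` V) (map_prod r r ` E) T g)"
    if "r \<in> ?R" for r
    using that less.prems by (intro less.hyps card_image_partition_rep_less) auto
  have "(\<Sum>r\<in>?R. card (inj_homs (r ` V) (map_prod r r ` E) S f)) =
        (\<Sum>r\<in>?R. card (inj_homs (r ` V) (map_prod r r ` E) T g))"
    using quotients_eq by (rule sum.cong[OF refl])
  then show ?case
    using card_homs_eq_card_inj_homs_plus_quotients[OF less.prems(2,1) assms(1), of f]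
      card_homs_eq_card_inj_homs_plus_quotients[OF less.prems(2,1) assms(2), of g]
      homs_eq[OF less.prems] by simp
qed

lemma card_homs_le_if_embedding:
  assumes "inj_on \<phi> P" "\<phi> ` P \<subseteq> Q" "\<forall>x\<in>P. \<phi> (F x) = G (\<phi> x)"
    and "finite V" "finite Q" "E \<subseteq> V \<times> V"
  shows "card (homs V E P F) \<le> card (homs V E Q G)"
proof (rule card_inj_on_le)
  show "inj_on (\<lambda>H. restrict (\<phi> \<circ> H) V) (homs V E P F)"
  proof (rule inj_onI)
    fix H1 H2 assume H: "H1 \<in> homs V E P F" "H2 \<in> homs V E P F"
      and eq: "restrict (\<phi> \<circ> H1) V = restrict (\<phi> \<circ> H2) V"
    show "H1 = H2"
    proof
      fix x
      show "H1 x = H2 x"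
        using fun_cong[OF eq, of x] homs_memD[OF H(1)] homs_memD[OF H(2)] assms(1)
        by (cases "x \<in> V") (auto simp: inj_on_def)
    qed
  qed
  show "(\<lambda>H. restrict (\<phi> \<circ> H) V) ` homs V E P F \<subseteq> homs V E Q G"
  proof clarify
    fix H assume H: "H \<in> homs V E P F"
    have "G (\<phi> (H x)) = \<phi> (H y)" if "(x, y) \<in> E" for x y
    proof -
      have "x \<in> V" "y \<in> V"
        using that assms(6) by auto
      then show ?thesis
        using assms(3) homs_memD(1,3)[OF H] that by metis
    qed
    then show "restrict (\<phi> \<circ> H) V \<in> homs V E Q G"
      using assms(2,6) homs_memD(1)[OF H] unfolding homs_def by fastforce
  qed
  show "finite (homs V E Q G)"
    using assms(4,5) by (rule finite_homs)
qed

lemma fds_iso_sym: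
  assumes "fds_iso S f T g" "\<forall>x\<in>S. f x \<in> S"
  shows "fds_iso T g S f"
proof -
  obtain h where h: "bij_betw h S T" "\<forall>x\<in>S. h (f x) = g (h x)"
    using assms(1) by (auto simp: fds_iso_def)
  have "the_inv_into S h (g y) = f (the_inv_into S h y)" if "y \<in> T" for y
  proof -
    define x where "x = the_inv_into S h y"
    have x: "x \<in> S" "h x = y"
      using h(1) that unfolding x_def bij_betw_def by (auto intro: the_inv_into_into f_the_inv_into_f)
    then have "g y = h (f x)"
      using h(2) by simp
    then show ?thesis
      using x assms(2) h(1) unfolding x_def[symmetric] by (simp add: bij_betw_def the_inv_into_f_f)
  qed
  then show ?thesis
    using bij_betw_the_inv_into[OF h(1)] by (auto simp: fds_iso_def)
qed

lemma card_homs_eq_if_fds_iso: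
  assumes "is_fds P F" "is_fds Q G" "fds_iso P F Q G" "finite V" "E \<subseteq> V \<times> V"
  shows "card (homs V E P F) = card (homs V E Q G)"
proof -
  have card_le_if_iso: "card (homs V E P' F') \<le> card (homs V E Q' G')"
    if "fds_iso P' F' Q' G'" "is_fds Q' G'" for P' F' Q' G'
    using that assms(4,5)
    by (auto simp: fds_iso_def is_fds_def bij_betw_def intro: card_homs_le_if_embedding)
  show ?thesis
    using card_le_if_iso[OF assms(3,2)] card_le_if_iso[OF fds_iso_sym assms(1)] assms(1,3)
    by (auto simp: is_fds_def intro: antisym)
qed

lemma card_homs_prod:
  assumes "E \<subseteq> V \<times> V"
  shows "card (homs V E (S \<times> T) (map_prod f g)) = card (homs V E S f) * card (homs V E T g)"
proof -
  let ?pair = "\<lambda>(h1, h2). \<lambda>x\<in>V. (h1 x, h2 x)"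
  let ?unpair = "\<lambda>H. (\<lambda>x\<in>V. fst (H x), \<lambda>x\<in>V. snd (H x))"
  have "bij_betw ?pair (homs V E S f \<times> homs V E T g) (homs V E (S \<times> T) (map_prod f g))"
  proof (rule bij_betwI[where g = ?unpair])
    show "?pair \<in> homs V E S f \<times> homs V E T g \<rightarrow> homs V E (S \<times> T) (map_prod f g)"
    proof (rule Pi_I, clarify)
      fix h1 h2 assume "h1 \<in> homs V E S f" "h2 \<in> homs V E T g"
      then show "(\<lambda>x\<in>V. (h1 x, h2 x)) \<in> homs V E (S \<times> T) (map_prod f g)"
        using assms by (auto simp: homs_def)
    qed
    show "?unpair \<in> homs V E (S \<times> T) (map_prod f g) \<rightarrow> homs V E S f \<times> homs V E T g"
    proof (rule Pi_I)
      fix H assume H: "H \<in> homs V E (S \<times> T) (map_prod f g)"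
      have "f (fst (H x)) = fst (H y) \<and> g (snd (H x)) = snd (H y)" if "(x, y) \<in> E" for x y
        using homs_memD(3)[OF H that] by (metis fst_map_prod snd_map_prod)
      then show "?unpair H \<in> homs V E S f \<times> homs V E T g"
        using assms homs_memD(1)[OF H] by (auto simp: homs_def mem_Times_iff)
    qed
    show "?unpair (?pair p) = p" if p_mem: "p \<in> homs V E S f \<times> homs V E T g" for p
    proof -
      obtain h1 h2 where p: "p = (h1, h2)" "h1 \<in> homs V E S f" "h2 \<in> homs V E T g"
        using p_mem by blast
      show ?thesis
        using p homs_memD(2)[OF p(2)] homs_memD(2)[OF p(3)] by (auto simp: fun_eq_iff)
    qed
    show "?pair (?unpair H) = H" if "H \<in> homs V E (S \<times> T) (map_prod f g)" for H
      using homs_memD(2)[OF that] by (auto simp: fun_eq_iff)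
  qed
  then have "card (homs V E S f \<times> homs V E T g) = card (homs V E (S \<times> T) (map_prod f g))"
    by (rule bij_betw_same_card)
  then show ?thesis
    by (simp add: card_cartesian_product)
qed

lemma is_fds_prod: "is_fds S f \<Longrightarrow> is_fds T g \<Longrightarrow> is_fds (S \<times> T) (map_prod f g)"
  by (auto simp: is_fds_def)

lemma is_fds_pow: "is_fds S f \<Longrightarrow> is_fds (pow_carrier k S) (pow_map f)"
  using finite_lists_length_eq[of S k] by (auto simp: is_fds_def pow_carrier_def pow_map_def conj_commute)

lemma fds_iso_Cons_pow:
  "fds_iso (S \<times> pow_carrier k S) (map_prod f (pow_map f)) (pow_carrier (Suc k) S) (pow_map f)"
  unfolding fds_iso_def
proof (intro exI conjI)
  show "bij_betw (\<lambda>(x, xs). x # xs) (S \<times> pow_carrier k S) (pow_carrier (Suc k) S)"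
    by (auto simp: bij_betw_def inj_on_def pow_carrier_def length_Suc_conv image_iff)
  show "\<forall>p\<in>S \<times> pow_carrier k S. (\<lambda>(x, xs). x # xs) (map_prod f (pow_map f) p) = pow_map f ((\<lambda>(x, xs). x # xs) p)"
    by (auto simp: pow_map_def)
qed

lemma card_homs_pow:
  assumes "is_fds S f" "finite V" "E \<subseteq> V \<times> V"
  shows "card (homs V E (pow_carrier k S) (pow_map f)) = card (homs V E S f) ^ k"
proof (induction k)
  case 0
  have "homs V E (pow_carrier 0 S) (pow_map f) = {\<lambda>x\<in>V. []}"
    using assms(3) by (auto simp: homs_def pow_carrier_def pow_map_def PiE_def extensional_def fun_eq_iff)
  then show ?case
    by simp
next
  case (Suc k)
  have "card (homs V E (pow_carrier (Suc k) S) (pow_map f)) =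
        card (homs V E (S \<times> pow_carrier k S) (map_prod f (pow_map f)))"
    using assms fds_iso_Cons_pow
    by (intro card_homs_eq_if_fds_iso[symmetric] is_fds_prod is_fds_pow)
  also have "\<dots> = card (homs V E S f) ^ Suc k"
    by (simp add: Suc.IH card_homs_prod[OF assms(3)])
  finally show ?case .
qed

lemma card_homs_eq_if_pow_iso:
  assumes "k \<ge> 1" "is_fds S f" "is_fds T g"
    and "fds_iso (pow_carrier k S) (pow_map f) (pow_carrier k T) (pow_map g)"
    and "finite V" "E \<subseteq> V \<times> V"
  shows "card (homs V E S f) = card (homs V E T g)"
proof -
  have "card (homs V E S f) ^ k = card (homs V E (pow_carrier k S) (pow_map f))"
    by (rule card_homs_pow[OF assms(2,5,6), symmetric])
  also have "\<dots> = card (homs V E (pow_carrier k T) (pow_map g))"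
    by (rule card_homs_eq_if_fds_iso[OF is_fds_pow[OF assms(2)] is_fds_pow[OF assms(3)] assms(4-6)])
  also have "\<dots> = card (homs V E T g) ^ k"
    by (rule card_homs_pow[OF assms(3,5,6)])
  finally show ?thesis
    using assms(1) by (simp add: power_eq_iff_eq_base)
qed

lemma fds_embedding_if_card_inj_homs_le:
  assumes "is_fds S f" "finite T"
    and inj_homs_le: "\<And>V E. finite (V :: nat set) \<Longrightarrow> E \<subseteq> V \<times> V \<Longrightarrow>
                        card (inj_homs V E S f) \<le> card (inj_homs V E T g)"
  shows "\<exists>h. inj_on h S \<and> h ` S \<subseteq> T \<and> (\<forall>x\<in>S. h (f x) = g (h x))"
proof -
  have S: "finite S" "\<forall>x\<in>S. f x \<in> S"
    using assms(1) by (auto simp: is_fds_def)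
  obtain e :: "'a \<Rightarrow> nat" where e: "inj_on e S"
    using finite_imp_inj_to_nat_seg[OF S(1)] by blast
  txt \<open>A copy of the functional graph of \<open>f\<close>, on which the inverse of \<open>e\<close> is an injective
    homomorphism into \<open>S\<close>.\<close>
  define V where "V = e ` S"
  define E where "E = (\<lambda>x. (e x, e (f x))) ` S"
  have V: "finite V" "E \<subseteq> V \<times> V"
    using S unfolding V_def E_def by auto
  have "restrict (the_inv_into S e) V \<in> inj_homs V E S f"
    using e S(2) unfolding V_def E_def
    by (auto simp: inj_homs_def homs_def the_inv_into_f_f inj_on_def)
  then have "card (inj_homs V E S f) \<noteq> 0"
    using finite_inj_homs[OF V(1) S(1)] by auto
  then have "inj_homs V E T g \<noteq> {}"
    using inj_homs_le[OF V] by auto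
  then obtain h where h: "h \<in> inj_homs V E T g"
    by blast
  have "inj_on (h \<circ> e) S" "(h \<circ> e) ` S \<subseteq> T" "\<forall>x\<in>S. (h \<circ> e) (f x) = g ((h \<circ> e) x)"
    using h e unfolding inj_homs_def homs_def V_def E_def by (auto intro: comp_inj_on)
  then show ?thesis
    by blast
qed

lemma fds_iso_if_embedding_card_le:
  assumes "inj_on h S" "h ` S \<subseteq> T" "\<forall>x\<in>S. h (f x) = g (h x)" "finite T" "card T \<le> card S"
  shows "fds_iso S f T g"
proof -
  have "h ` S = T"
    using assms(1,2,4,5) by (metis card_image card_seteq)
  then show ?thesis
    using assms(1,3) by (auto simp: fds_iso_def bij_betw_def)
qed

theorem mainTheorem3:
  fixes S :: "'a set" and f :: "'a \<Rightarrow> 'a" and T :: "'b set" and g :: "'b \<Rightarrow> 'b"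
    and k :: nat
  assumes "k \<ge> 1"
    and "is_fds S f" and "is_fds T g"
    and "fds_iso (pow_carrier k S) (pow_map f) (pow_carrier k T) (pow_map g)"
  shows "fds_iso S f T g"
proof -
  have finite_ST: "finite S" "finite T"
    using assms(2,3) by (auto simp: is_fds_def)
  have homs_eq: "card (homs V E S f) = card (homs V E T g)"
    if "finite (V :: nat set)" "E \<subseteq> V \<times> V" for V E
    using card_homs_eq_if_pow_iso[OF assms that] .
  have inj_homs_eq: "card (inj_homs V E S f) = card (inj_homs V E T g)"
    if "finite (V :: nat set)" "E \<subseteq> V \<times> V" for V E
    using card_inj_homs_eq_if_card_homs_eq[OF finite_ST homs_eq that] .
  have "\<exists>h. inj_on h S \<and> h ` S \<subseteq> T \<and> (\<forall>x\<in>S. h (f x) = g (h x))"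
    by (rule fds_embedding_if_card_inj_homs_le[OF assms(2) finite_ST(2)]) (simp add: inj_homs_eq)
  then obtain h where h: "inj_on h S" "h ` S \<subseteq> T" "\<forall>x\<in>S. h (f x) = g (h x)"
    by blast
  have "\<exists>h'. inj_on h' T \<and> h' ` T \<subseteq> S \<and> (\<forall>y\<in>T. h' (g y) = f (h' y))"
    by (rule fds_embedding_if_card_inj_homs_le[OF assms(3) finite_ST(1)]) (simp add: inj_homs_eq)
  then obtain h' where "inj_on h' T" "h' ` T \<subseteq> S"
    by blast
  then have "card T \<le> card S"
    using finite_ST(1) by (rule card_inj_on_le)
  then show ?thesis
    by (rule fds_iso_if_embedding_card_le[OF h finite_ST(2)])
qed

end
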